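(* Let $n\ge2$ be an integer, $l_k=\pi k/n$, $S_n=\sum_{k=1}^{n-1}\csc l_k$, $c_k=\cos\frac{\pi(2k-1)}{2n}$, $\sigma_k(\phi)=(1-c_k^2\cos^2\phi)^{1/2}$, and $V(\phi)=\frac{S_n}{4\cos\phi}+\frac14\sum_{k=1}^n\frac{1}{\sigma_k(\phi)}$ for $\phi\in(-\pi/2,\pi/2)$. Then $V$ has exactly three critical points in $(-\pi/2,\pi/2)$, all non-degenerate; they are $-\phi_R,0,\phi_R$ with $\phi_R\in(0,\pi/4)$.
   Context: $V$ is the shape potential, in Devaney-type coordinates $(q_1,q_2)=r(\cos\phi,2\sin\phi)$, of the spatial double-polygon problem ($2n$ unit masses forming two congruent regular $n$-gons in parallel horizontal planes, centered on the $z$-axis and twisted relative to each other). *)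

theory Defs
  imports "HOL-Analysis.Analysis"
begin

definition S_n :: "nat \<Rightarrow> real" where
  "S_n n = (\<Sum>k=1..n-1. 1 / sin (pi * real k / real n))"

definition c_k :: "nat \<Rightarrow> nat \<Rightarrow> real" where
  "c_k n k = cos (pi * (2 * real k - 1) / (2 * real n))"

definition sigma_k :: "nat \<Rightarrow> nat \<Rightarrow> real \<Rightarrow> real" where
  "sigma_k n k \<phi> = sqrt (1 - (c_k n k)^2 * (cos \<phi>)^2)"

definition Vpot :: "nat \<Rightarrow> real \<Rightarrow> real" where
  "Vpot n \<phi> = S_n n / (4 * cos \<phi>) + (1/4) * (\<Sum>k=1..n. 1 / sigma_k n k \<phi>)"

end

theory Submission
  imports Defs
begin

text \<open>
  Differentiating gives \<open>V'(\<phi>) = sin \<phi> / (4 cos\<^sup>2 \<phi>) \<cdot> (S\<^sub>n - G(cos \<phi>))\<close> with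
  \<open>G(u) = \<Sum>\<^sub>k c\<^sub>k\<^sup>2 u\<^sup>3 / (1 - c\<^sub>k\<^sup>2 u\<^sup>2)\<^bsup>3/2\<^esup>\<close>, which is strictly increasing on \<open>(0, 1]\<close>.
  Since \<open>G(cos (\<pi>/4)) < n/2 \<le> n - 1 \<le> S\<^sub>n < G(1)\<close>, the equation \<open>G(cos \<phi>) = S\<^sub>n\<close> has
  exactly the two solutions \<open>\<plusminus>\<phi>\<^sub>R\<close> with \<open>0 < \<phi>\<^sub>R < \<pi>/4\<close>. At \<open>0\<close> the second derivative is
  \<open>(S\<^sub>n - G(1))/4 < 0\<close>, and at \<open>\<plusminus>\<phi>\<^sub>R\<close> it is \<open>sin\<^sup>2 \<phi>\<^sub>R G'(cos \<phi>\<^sub>R) / (4 cos\<^sup>2 \<phi>\<^sub>R) > 0\<close>.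
\<close>

lemma sum_cos_odd_multiples:
  "2 * sin t * (\<Sum>k=1..n. cos ((2 * real k - 1) * t)) = sin (2 * real n * t)"
proof (induction n)
  case 0
  then show ?case by simp
next
  case (Suc n)
  have "2 * sin t * cos ((2 * real n + 1) * t)
      = sin ((2 * real n + 1) * t + t) - sin ((2 * real n + 1) * t - t)"
    by (simp add: sin_add sin_diff)
  also have "\<dots> = sin (2 * real (Suc n) * t) - sin (2 * real n * t)"
    by (simp add: algebra_simps)
  finally show ?case
    using Suc by (simp add: distrib_left algebra_simps)
qed

lemma sin_le_sin_between:
  assumes "0 \<le> a" "a \<le> x" "x \<le> pi - a"
  shows "sin a \<le> sin x"
proof (cases "x \<le> pi / 2")
  case True
  then show ?thesis using assms by (subst sin_mono_le_eq) auto
next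
  case False
  have "sin a \<le> sin (pi - x)" using assms False by (subst sin_mono_le_eq) auto
  then show ?thesis by simp
qed

lemma c_k_sq_less_1:
  assumes "1 \<le> k" "k \<le> n"
  shows "(c_k n k)^2 < 1"
proof -
  let ?t = "pi * (2 * real k - 1) / (2 * real n)"
  have "0 < ?t" using assms by (auto intro!: divide_pos_pos)
  moreover have "?t < pi"
    using assms by (simp add: divide_less_eq)
  ultimately have "0 < sin ?t" by (rule sin_gt_zero)
  then have "(cos ?t)^2 < 1" using sin_cos_squared_add[of ?t] by (smt (verit) zero_less_power)
  then show ?thesis by (simp add: c_k_def)
qed

lemma one_minus_c_k_sq_pos:
  assumes "1 \<le> k" "k \<le> n" "\<bar>u\<bar> \<le> 1"
  shows "0 < 1 - (c_k n k)^2 * u^2"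
proof -
  have "(c_k n k)^2 * u^2 \<le> (c_k n k)^2"
    using assms(3) by (simp add: mult_left_le abs_square_le_1)
  then show ?thesis using c_k_sq_less_1[OF assms(1,2)] by linarith
qed

lemma c_k_first_pos:
  assumes "n \<ge> 2"
  shows "0 < c_k n 1"
proof -
  have "pi * (2 * real 1 - 1) / (2 * real n) < pi / 2"
    using assms by (simp add: divide_less_eq)
  moreover have "0 < pi * (2 * real 1 - 1) / (2 * real n)" using assms by simp
  ultimately show ?thesis unfolding c_k_def by (intro cos_gt_zero_pi) auto
qed

lemma c_k_last:
  assumes "n \<ge> 1"
  shows "c_k n n = - c_k n 1"
proof -
  have "pi * (2 * real n - 1) / (2 * real n) = pi - pi * (2 * real 1 - 1) / (2 * real n)"
    using assms by (simp add: field_simps)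
  then show ?thesis unfolding c_k_def by simp
qed

lemma sin_pi_div_pos:
  assumes "n \<ge> 2"
  shows "0 < sin (pi / real n)"
  using assms by (intro sin_gt_zero) (auto simp: divide_less_eq)

lemma sum_c_k_sq:
  assumes "n \<ge> 2"
  shows "(\<Sum>k=1..n. (c_k n k)^2) = real n / 2"
proof -
  let ?t = "pi / real n"
  have sq: "(c_k n k)^2 = (1 + cos ((2 * real k - 1) * ?t)) / 2" for k
  proof -
    have arg: "2 * (pi * (2 * real k - 1) / (2 * real n)) = (2 * real k - 1) * ?t"
      by simp
    have "cos (2 * (pi * (2 * real k - 1) / (2 * real n))) = 2 * (c_k n k)^2 - 1"
      unfolding c_k_def by (rule cos_double_cos)
    then show ?thesis unfolding arg by simp
  qed
  have full_turn: "2 * real n * ?t = 2 * pi" using assms by simp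
  have "sin ?t \<noteq> 0" using sin_pi_div_pos[OF assms] by simp
  moreover have "2 * sin ?t * (\<Sum>k=1..n. cos ((2 * real k - 1) * ?t)) = 0"
    by (simp only: sum_cos_odd_multiples full_turn sin_two_pi)
  ultimately have "(\<Sum>k=1..n. cos ((2 * real k - 1) * ?t)) = 0" by simp
  then show ?thesis
    by (simp add: sq sum_divide_distrib[symmetric] sum.distrib)
qed

lemma S_n_ge:
  assumes "n \<ge> 2"
  shows "real n - 1 \<le> S_n n"
proof -
  have "(\<Sum>k=1..n-1. (1::real)) \<le> S_n n"
    unfolding S_n_def
  proof (rule sum_mono)
    fix k assume "k \<in> {1..n-1}"
    then have "0 < sin (pi * real k / real n)"
      using assms by (intro sin_gt_zero) (auto simp: field_simps)
    then show "1 \<le> 1 / sin (pi * real k / real n)" by simp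
  qed
  then show ?thesis using assms by (simp add: of_nat_diff)
qed

lemma S_n_le:
  assumes "n \<ge> 2"
  shows "S_n n \<le> (real n - 1) / sin (pi / real n)"
proof -
  note pos = sin_pi_div_pos[OF assms]
  have "S_n n \<le> (\<Sum>k=1..n-1. 1 / sin (pi / real n))"
    unfolding S_n_def
  proof (rule sum_mono)
    fix k assume k: "k \<in> {1..n-1}"
    have "pi * real k \<le> pi * (real n - 1)"
      using k by (intro mult_left_mono) (auto simp: of_nat_diff)
    then have "pi / real n \<le> pi * real k / real n" "pi * real k / real n \<le> pi - pi / real n"
      using k assms by (auto simp: field_simps)
    then have "sin (pi / real n) \<le> sin (pi * real k / real n)"
      by (intro sin_le_sin_between) auto
    then show "1 / sin (pi * real k / real n) \<le> 1 / sin (pi / real n)"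
      using pos by (intro divide_left_mono) auto
  qed
  then show ?thesis using assms by (simp add: of_nat_diff)
qed

text \<open>With \<open>a = c\<^sub>k\<^sup>2\<close> and \<open>u = cos \<phi>\<close>, \<open>g_term a u\<close> is \<open>c\<^sub>k\<^sup>2 cos\<^sup>3 \<phi> / \<sigma>\<^sub>k(\<phi>)\<^sup>3\<close>.\<close>

definition g_term :: "real \<Rightarrow> real \<Rightarrow> real" where
  "g_term a u = a * u^3 / (sqrt (1 - a * u^2))^3"

definition g_term' :: "real \<Rightarrow> real \<Rightarrow> real" where
  "g_term' a u = 3 * a * u^2 / (sqrt (1 - a * u^2))^5"

lemma has_real_derivative_g_term:
  assumes "0 < 1 - a * u^2"
  shows "(g_term a has_real_derivative g_term' a u) (at u)"
proof -
  define s where "s = sqrt (1 - a * u^2)"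
  have s_pos: "0 < s" using assms by (simp add: s_def)
  have s_sq: "s^2 = 1 - a * u^2" using assms by (simp add: s_def)
  have ds: "((\<lambda>u. sqrt (1 - a * u^2)) has_real_derivative - (a * u) / s) (at u)"
    using assms unfolding s_def by (auto intro!: derivative_eq_intros simp: field_simps)
  have num: "((\<lambda>u. a * u^3) has_real_derivative a * (3 * u^2)) (at u)"
    by (auto intro!: derivative_eq_intros)
  have den: "((\<lambda>u. (sqrt (1 - a * u^2))^3) has_real_derivative 3 * (- (a * u) / s * s^2)) (at u)"
    using DERIV_power[OF ds, of 3] by (simp add: s_def)
  have "((\<lambda>u. a * u^3 / (sqrt (1 - a * u^2))^3) has_real_derivative
      (a * (3 * u^2) * s^3 - a * u^3 * (3 * (- (a * u) / s * s^2))) / (s^3 * s^3)) (at u)"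
    using DERIV_divide[OF num den] s_pos by (simp add: s_def)
  moreover have "(a * (3 * u^2) * s^3 - a * u^3 * (3 * (- (a * u) / s * s^2))) / (s^3 * s^3)
      = 3 * a * u^2 / s^5"
    using s_pos by (simp add: field_simps) (use s_sq in algebra)
  ultimately show ?thesis
    unfolding g_term_def[abs_def] g_term'_def s_def by simp
qed

lemma g_term_nonneg:
  assumes "0 \<le> a" "0 \<le> u" "0 < 1 - a * u^2"
  shows "0 \<le> g_term a u"
  using assms by (simp add: g_term_def)

lemma g_term'_nonneg:
  assumes "0 \<le> a" "0 < 1 - a * u^2"
  shows "0 \<le> g_term' a u"
  using assms by (simp add: g_term'_def)

lemma g_term'_pos:
  assumes "0 < a" "u \<noteq> 0" "0 < 1 - a * u^2"
  shows "0 < g_term' a u"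
  using assms by (simp add: g_term'_def)

lemma g_term_cos_45:
  assumes "a < 2"
  shows "g_term a (sqrt 2 / 2) = a / (sqrt (2 - a))^3"
proof -
  have "sqrt (1 - a * (sqrt 2 / 2)^2) = sqrt (2 - a) / sqrt 2"
    by (simp add: power_divide real_sqrt_divide[symmetric] field_simps)
  then show ?thesis
    unfolding g_term_def by (simp add: power_divide power3_eq_cube)
qed

lemma g_term_cos_45_le:
  assumes "0 \<le> a" "a \<le> 1"
  shows "g_term a (sqrt 2 / 2) \<le> a"
proof -
  have "1 \<le> (sqrt (2 - a))^3" using assms by (simp add: one_le_power)
  then have "a * 1 \<le> a * (sqrt (2 - a))^3" using assms by (intro mult_left_mono) auto
  then show ?thesis using assms by (simp add: g_term_cos_45 divide_le_eq)
qed

lemma g_term_cos_45_less: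
  assumes "0 < a" "a < 1"
  shows "g_term a (sqrt 2 / 2) < a"
proof -
  have "1 < (sqrt (2 - a))^3" using assms by (simp add: one_less_power)
  then show ?thesis using assms by (simp add: g_term_cos_45 divide_less_eq)
qed

lemma has_real_derivative_inverse_sqrt_cos:
  assumes "cos x \<noteq> 0" "0 < 1 - a * (cos x)^2"
  shows "((\<lambda>x. 1 / sqrt (1 - a * (cos x)^2)) has_real_derivative
           - sin x / (cos x)^2 * g_term a (cos x)) (at x)"
proof -
  define s where "s = sqrt (1 - a * (cos x)^2)"
  have s_pos: "0 < s" using assms by (simp add: s_def)
  have g_term_cos: "g_term a (cos x) = a * (cos x)^3 / s^3" by (simp add: g_term_def s_def)
  have "((\<lambda>x. 1 / sqrt (1 - a * (cos x)^2)) has_real_derivative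
      - (inverse s / 2 * (a * (2 * cos x * sin x))) / (s * s)) (at x)"
    using assms unfolding s_def by (auto intro!: derivative_eq_intros simp: power2_eq_square)
  moreover have "- (inverse s / 2 * (a * (2 * cos x * sin x))) / (s * s)
      = - sin x / (cos x)^2 * g_term a (cos x)"
    using s_pos assms(1) by (simp add: g_term_cos field_simps power3_eq_cube power2_eq_square)
  ultimately show ?thesis by simp
qed

definition G_n :: "nat \<Rightarrow> real \<Rightarrow> real" where
  "G_n n u = (\<Sum>k=1..n. g_term ((c_k n k)^2) u)"

definition G_n' :: "nat \<Rightarrow> real \<Rightarrow> real" where
  "G_n' n u = (\<Sum>k=1..n. g_term' ((c_k n k)^2) u)"

lemma has_real_derivative_G_n:
  assumes "\<bar>u\<bar> \<le> 1"
  shows "(G_n n has_real_derivative G_n' n u) (at u)"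
  unfolding G_n_def[abs_def] G_n'_def
  using assms by (intro DERIV_sum has_real_derivative_g_term one_minus_c_k_sq_pos) auto

lemma has_real_derivative_G_n_cos:
  "((\<lambda>x. G_n n (cos x)) has_real_derivative - sin x * G_n' n (cos x)) (at x)"
  using DERIV_chain2[OF has_real_derivative_G_n DERIV_cos] by (simp add: mult.commute)

lemma G_n'_pos:
  assumes "n \<ge> 2" "u \<noteq> 0" "\<bar>u\<bar> \<le> 1"
  shows "0 < G_n' n u"
  unfolding G_n'_def
proof (rule sum_pos2[where i = 1])
  show "0 < g_term' ((c_k n 1)^2) u"
    using assms c_k_first_pos[OF assms(1)] by (intro g_term'_pos one_minus_c_k_sq_pos) auto
  show "0 \<le> g_term' ((c_k n k)^2) u" if "k \<in> {1..n}" for k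
    using that assms by (intro g_term'_nonneg one_minus_c_k_sq_pos) auto
qed (use assms in auto)

lemma G_n_strict_mono:
  assumes "n \<ge> 2" "0 < u" "u < v" "v \<le> 1"
  shows "G_n n u < G_n n v"
  using assms(3)
proof (rule DERIV_pos_imp_increasing)
  fix x assume "u \<le> x" "x \<le> v"
  then show "\<exists>y. (G_n n has_real_derivative y) (at x) \<and> 0 < y"
    using assms by (intro exI[of _ "G_n' n x"] conjI has_real_derivative_G_n G_n'_pos) auto
qed

lemma G_n_eq_iff:
  assumes "n \<ge> 2" "0 < u" "u \<le> 1" "0 < v" "v \<le> 1"
  shows "G_n n u = G_n n v \<longleftrightarrow> u = v"
  using G_n_strict_mono[OF assms(1)] assms by (cases u v rule: linorder_cases) force+

lemma G_n_cos_45_less_S_n: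
  assumes "n \<ge> 2"
  shows "G_n n (sqrt 2 / 2) < S_n n"
proof -
  have "G_n n (sqrt 2 / 2) < (\<Sum>k=1..n. (c_k n k)^2)"
    unfolding G_n_def
  proof (rule sum_strict_mono_ex1)
    show "\<forall>k\<in>{1..n}. g_term ((c_k n k)^2) (sqrt 2 / 2) \<le> (c_k n k)^2"
      using c_k_sq_less_1 by (fastforce intro: g_term_cos_45_le)
    show "\<exists>k\<in>{1..n}. g_term ((c_k n k)^2) (sqrt 2 / 2) < (c_k n k)^2"
      using assms c_k_first_pos[OF assms] c_k_sq_less_1[of 1 n]
      by (intro bexI[of _ 1] g_term_cos_45_less) auto
  qed simp
  also have "\<dots> = real n / 2" by (rule sum_c_k_sq[OF assms])
  also have "\<dots> \<le> real n - 1" using assms by simp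
  also have "\<dots> \<le> S_n n" by (rule S_n_ge[OF assms])
  finally show ?thesis .
qed

text \<open>Only the outer terms \<open>k = 1, n\<close> of \<open>G_n n 1\<close> are kept: they already beat the crude
  bound \<open>S_n_le\<close>.\<close>

lemma G_n_1_ge:
  assumes "n \<ge> 2"
  shows "2 * (cos (pi / (2 * real n)))^2 / (sin (pi / (2 * real n)))^3 \<le> G_n n 1"
proof -
  let ?c = "cos (pi / (2 * real n))" and ?s = "sin (pi / (2 * real n))"
  have "0 < ?s" using assms by (intro sin_gt_zero) (auto simp: divide_less_eq)
  then have "sqrt (1 - ?c^2) = ?s" by (simp add: sin_squared_eq[symmetric])
  moreover have "c_k n 1 = ?c" "(c_k n n)^2 = ?c^2"
    using c_k_last[of n] assms by (simp_all add: c_k_def)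
  ultimately have ends: "g_term ((c_k n 1)^2) 1 = ?c^2 / ?s^3" "g_term ((c_k n n)^2) 1 = ?c^2 / ?s^3"
    by (simp_all add: g_term_def)
  have "(\<Sum>k\<in>{1, n}. g_term ((c_k n k)^2) 1) \<le> G_n n 1"
    unfolding G_n_def
    using assms by (intro sum_mono2 g_term_nonneg one_minus_c_k_sq_pos) auto
  then show ?thesis using assms by (simp add: ends[simplified])
qed

lemma half_angle_estimate:
  assumes "n \<ge> 2"
  shows "(real n - 1) * (sin (pi / (2 * real n)))^2 < 4 * (cos (pi / (2 * real n)))^3"
proof -
  define t where "t = pi / (2 * real n)"
  have t_pos: "0 < t" and t_le: "t \<le> pi / 4"
    using assms by (auto simp: t_def field_simps)
  have "sqrt 2 / 2 \<le> cos t"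
    using t_pos t_le cos_monotone_0_pi_le[of t "pi / 4"] by (simp add: cos_45)
  then have "(sqrt 2 / 2)^3 \<le> (cos t)^3" by (intro power_mono) auto
  then have cos_cube: "sqrt 2 \<le> 4 * (cos t)^3" by (simp add: power3_eq_cube)
  have sqrt2: "1.41 < sqrt 2" by (rule real_less_rsqrt) (simp add: power2_eq_square)
  have "pi^2 \<le> 3.1416^2" using pi_approx by (intro power_mono) auto
  then have pi_sq: "pi^2 < 9.87" by (simp add: power2_eq_square)
  have "(real n - 1) * (sin t)^2 \<le> (real n - 1) * t^2"
    using assms t_pos t_le sin_x_le_x[of t] sin_gt_zero[of t]
    by (intro mult_left_mono power_mono) auto
  also have "\<dots> < real n * t^2" using t_pos by simp
  also have "\<dots> = pi^2 / (4 * real n)" using assms by (simp add: t_def field_simps power2_eq_square)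
  also have "\<dots> \<le> pi^2 / 8" using assms by (intro divide_left_mono) auto
  also have "\<dots> < 4 * (cos t)^3" using pi_sq sqrt2 cos_cube by simp
  finally show ?thesis by (simp add: t_def)
qed

lemma S_n_less_G_n_1:
  assumes "n \<ge> 2"
  shows "S_n n < G_n n 1"
proof -
  let ?c = "cos (pi / (2 * real n))" and ?s = "sin (pi / (2 * real n))"
  have s_pos: "0 < ?s" using assms by (intro sin_gt_zero) (auto simp: divide_less_eq)
  have "sin (pi / real n) = 2 * ?s * ?c" using sin_double[of "pi / (2 * real n)"] by simp
  then have "S_n n \<le> (real n - 1) / (2 * ?s * ?c)" using S_n_le[OF assms] by simp
  also have "\<dots> < 2 * ?c^2 / ?s^3"
  proof -
    have "(real n - 1) * ?s^2 * ?s < 4 * ?c^3 * ?s"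
      using half_angle_estimate[OF assms] s_pos by (rule mult_strict_right_mono)
    then show ?thesis
      using s_pos c_k_first_pos[OF assms]
      by (simp add: c_k_def field_simps power2_eq_square power3_eq_cube)
  qed
  also have "\<dots> \<le> G_n n 1" by (rule G_n_1_ge[OF assms])
  finally show ?thesis .
qed

lemma balance_angle:
  assumes "n \<ge> 2"
  obtains r where "0 < r" "r < pi / 4"
    and "\<And>x. x \<in> {-pi/2<..<pi/2} \<Longrightarrow> G_n n (cos x) = S_n n \<longleftrightarrow> \<bar>x\<bar> = r"
proof -
  have "continuous_on {0..pi/4} (\<lambda>x. G_n n (cos x))"
    using has_real_derivative_G_n_cos
    by (intro continuous_at_imp_continuous_on ballI DERIV_isCont) blast
  moreover have at_pi_4: "G_n n (cos (pi/4)) < S_n n" and at_0: "S_n n < G_n n (cos 0)"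
    using G_n_cos_45_less_S_n[OF assms] S_n_less_G_n_1[OF assms] by (simp_all add: cos_45)
  ultimately obtain r where r: "0 \<le> r" "r \<le> pi/4" "G_n n (cos r) = S_n n"
    using IVT2'[of "\<lambda>x. G_n n (cos x)" "pi/4" "S_n n" 0] by force
  have "r \<noteq> 0" using r(3) at_0 by auto
  moreover have "r \<noteq> pi/4"
  proof
    assume "r = pi/4"
    with r(3) at_pi_4 show False by simp
  qed
  ultimately have r_bounds: "0 < r" "r < pi/4" using r(1,2) by auto
  have "G_n n (cos x) = S_n n \<longleftrightarrow> \<bar>x\<bar> = r" if x: "x \<in> {-pi/2<..<pi/2}" for x
  proof -
    have cos_x: "0 < cos x" using x by (auto intro: cos_gt_zero_pi)
    have cos_r: "0 < cos r" using r_bounds by (intro cos_gt_zero_pi) auto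
    have "G_n n (cos x) = S_n n \<longleftrightarrow> cos \<bar>x\<bar> = cos r"
      using G_n_eq_iff[OF assms cos_x cos_le_one cos_r cos_le_one] r(3) by simp
    also have "\<dots> \<longleftrightarrow> \<bar>x\<bar> = r"
      using x r_bounds cos_inj_pi[of "\<bar>x\<bar>" r] by auto
    finally show ?thesis .
  qed
  with r_bounds that show ?thesis by blast
qed

definition Vpot' :: "nat \<Rightarrow> real \<Rightarrow> real" where
  "Vpot' n x = sin x / (4 * (cos x)^2) * (S_n n - G_n n (cos x))"

lemma has_real_derivative_Vpot:
  assumes "x \<in> {-pi/2<..<pi/2}"
  shows "(Vpot n has_real_derivative Vpot' n x) (at x)"
proof -
  have cos_x: "0 < cos x" using assms by (auto intro: cos_gt_zero_pi)
  have "((\<lambda>x. S_n n / (4 * cos x)) has_real_derivative sin x / (4 * (cos x)^2) * S_n n) (at x)"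
    using cos_x by (auto intro!: derivative_eq_intros simp: field_simps power2_eq_square)
  moreover have "((\<lambda>x. \<Sum>k=1..n. 1 / sigma_k n k x) has_real_derivative
      (\<Sum>k=1..n. - sin x / (cos x)^2 * g_term ((c_k n k)^2) (cos x))) (at x)"
    unfolding sigma_k_def using cos_x
    by (intro DERIV_sum has_real_derivative_inverse_sqrt_cos one_minus_c_k_sq_pos) auto
  ultimately have "(Vpot n has_real_derivative sin x / (4 * (cos x)^2) * S_n n
      + 1/4 * (\<Sum>k=1..n. - sin x / (cos x)^2 * g_term ((c_k n k)^2) (cos x))) (at x)"
    unfolding Vpot_def[abs_def] by (intro DERIV_add DERIV_cmult)
  then show ?thesis
    by (simp add: Vpot'_def G_n_def right_diff_distrib sum_distrib_left sum_negf)
qed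

lemma has_real_derivative_Vpot':
  assumes "x \<in> {-pi/2<..<pi/2}"
  shows "(Vpot' n has_real_derivative
      ((cos x)^2 + 2 * (sin x)^2) / (4 * (cos x)^3) * (S_n n - G_n n (cos x))
      + (sin x)^2 / (4 * (cos x)^2) * G_n' n (cos x)) (at x)"
proof -
  have cos_x: "0 < cos x" using assms by (auto intro: cos_gt_zero_pi)
  have factor: "((\<lambda>x. sin x / (4 * (cos x)^2)) has_real_derivative
      ((cos x)^2 + 2 * (sin x)^2) / (4 * (cos x)^3)) (at x)"
    using cos_x
    by (auto intro!: derivative_eq_intros
        simp: field_simps power2_eq_square power3_eq_cube eval_nat_numeral)
  have balance: "((\<lambda>x. S_n n - G_n n (cos x)) has_real_derivative sin x * G_n' n (cos x)) (at x)"
    using DERIV_diff[OF DERIV_const has_real_derivative_G_n_cos] by simp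
  from DERIV_mult'[OF factor balance] show ?thesis
    unfolding Vpot'_def[abs_def] by (simp add: power2_eq_square algebra_simps)
qed

lemma deriv_Vpot:
  assumes "x \<in> {-pi/2<..<pi/2}"
  shows "deriv (Vpot n) x = Vpot' n x"
  by (rule DERIV_imp_deriv[OF has_real_derivative_Vpot[OF assms]])

lemma deriv2_Vpot:
  assumes "x \<in> {-pi/2<..<pi/2}"
  shows "deriv (deriv (Vpot n)) x =
      ((cos x)^2 + 2 * (sin x)^2) / (4 * (cos x)^3) * (S_n n - G_n n (cos x))
      + (sin x)^2 / (4 * (cos x)^2) * G_n' n (cos x)"
proof -
  have "\<forall>\<^sub>F y in nhds x. y \<in> {-pi/2<..<pi/2}"
    using assms by (intro eventually_nhds_in_open) auto
  then have "\<forall>\<^sub>F y in nhds x. deriv (Vpot n) y = Vpot' n y"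
    by (rule eventually_mono) (rule deriv_Vpot)
  then have "deriv (deriv (Vpot n)) x = deriv (Vpot' n) x" by (rule deriv_cong_ev) simp
  then show ?thesis using DERIV_imp_deriv[OF has_real_derivative_Vpot'[OF assms]] by simp
qed

lemma deriv_Vpot_eq_0_iff:
  assumes "x \<in> {-pi/2<..<pi/2}"
  shows "deriv (Vpot n) x = 0 \<longleftrightarrow> x = 0 \<or> G_n n (cos x) = S_n n"
proof -
  have "0 < cos x" using assms by (auto intro: cos_gt_zero_pi)
  moreover have "sin x = 0 \<longleftrightarrow> x = 0" using assms by (intro sin_zero_pi_iff) auto
  ultimately show ?thesis by (auto simp: deriv_Vpot[OF assms] Vpot'_def)
qed

theorem lemma5p3:
  fixes n :: nat
  assumes "n \<ge> 2"
  shows "\<exists>\<phi>R. 0 < \<phi>R \<and> \<phi>R < pi/4 \<and>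
    {\<phi> \<in> {-pi/2<..<pi/2}. deriv (Vpot n) \<phi> = 0} = {-\<phi>R, 0, \<phi>R} \<and>
    (\<forall>\<phi>\<in>{-\<phi>R, 0, \<phi>R}. deriv (deriv (Vpot n)) \<phi> \<noteq> 0)"
proof -
  obtain r where r: "0 < r" "r < pi/4"
    and balance: "\<And>x. x \<in> {-pi/2<..<pi/2} \<Longrightarrow> G_n n (cos x) = S_n n \<longleftrightarrow> \<bar>x\<bar> = r"
    using balance_angle[OF assms] by blast
  have crit_in: "{-r, 0, r} \<subseteq> {-pi/2<..<pi/2}" using r by auto
  have critical: "{\<phi> \<in> {-pi/2<..<pi/2}. deriv (Vpot n) \<phi> = 0} = {-r, 0, r}"
    using crit_in r by (auto simp: deriv_Vpot_eq_0_iff balance)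
  have "deriv (deriv (Vpot n)) 0 = (S_n n - G_n n 1) / 4"
    by (simp add: deriv2_Vpot)
  then have "deriv (deriv (Vpot n)) 0 < 0" using S_n_less_G_n_1[OF assms] by simp
  moreover have "0 < deriv (deriv (Vpot n)) x" if "x \<in> {-r, r}" for x
  proof -
    have x: "x \<in> {-pi/2<..<pi/2}" "x \<noteq> 0" and "G_n n (cos x) = S_n n"
      using that crit_in r balance by auto
    moreover have "sin x \<noteq> 0" using x by (subst sin_zero_pi_iff) auto
    moreover have "0 < cos x" using x by (auto intro: cos_gt_zero_pi)
    ultimately show ?thesis using G_n'_pos[OF assms, of "cos x"] by (simp add: deriv2_Vpot)
  qed
  ultimately show ?thesis using r critical by (intro exI[of _ r]) force
qed

end
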